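(* Let $\Gamma=(V,\nu,\mu)$ be a fuzzy graph on $n$ vertices that is not fuzzy-regular, with maximum fuzzy degree $\Delta$ and minimum fuzzy degree $\delta$. Then $$\sigma^*(\Gamma)\ge\frac{(\Delta-\delta)^2}{n^2}.$$
   Context: A fuzzy graph $\Gamma=(V,\nu,\mu)$ consists of a finite vertex set $V$ with $|V|=n\ge1$, a map $\nu:V\to[0,1]$, and a symmetric map $\mu:V\times V\to[0,1]$ with $\mu(u,v)\le\min(\nu(u),\nu(v))$. The fuzzy degree is $d_\Gamma(v)=\sum_{u\ne v}\mu(v,u)$; $\Gamma$ is fuzzy-regular if all fuzzy degrees are equal. The fuzzy size is $\mathrm{ew}(\Gamma)=\frac12\sum_v d_\Gamma(v)$, $\lambda=2\,\mathrm{ew}(\Gamma)/n$, and the fuzzy sigma index is $\sigma^*(\Gamma)=\frac1n\sum_{v}(d_\Gamma(v)-\lambda)^2$. $\Delta=\max_v d_\Gamma(v)$, $\delta=\min_v d_\Gamma(v)$. *)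

theory Defs
  imports Main "HOL-Library.Multiset" Complex_Main
begin

definition fuzzy_graph :: "'a set \<Rightarrow> ('a \<Rightarrow> real) \<Rightarrow> ('a \<Rightarrow> 'a \<Rightarrow> real) \<Rightarrow> bool" where
  "fuzzy_graph V \<nu> \<mu> \<longleftrightarrow> finite V \<and> V \<noteq> {} \<and>
     (\<forall>v\<in>V. 0 \<le> \<nu> v \<and> \<nu> v \<le> 1) \<and>
     (\<forall>u\<in>V. \<forall>v\<in>V. 0 \<le> \<mu> u v \<and> \<mu> u v \<le> 1 \<and> \<mu> u v = \<mu> v u \<and> \<mu> u v \<le> min (\<nu> u) (\<nu> v))"

definition fuzzy_degree :: "'a set \<Rightarrow> ('a \<Rightarrow> 'a \<Rightarrow> real) \<Rightarrow> 'a \<Rightarrow> real" where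
  "fuzzy_degree V \<mu> v = (\<Sum>u\<in>V - {v}. \<mu> v u)"

definition fuzzy_regular :: "'a set \<Rightarrow> ('a \<Rightarrow> 'a \<Rightarrow> real) \<Rightarrow> bool" where
  "fuzzy_regular V \<mu> \<longleftrightarrow> (\<forall>u\<in>V. \<forall>v\<in>V. fuzzy_degree V \<mu> u = fuzzy_degree V \<mu> v)"

definition fuzzy_size :: "'a set \<Rightarrow> ('a \<Rightarrow> 'a \<Rightarrow> real) \<Rightarrow> real" where
  "fuzzy_size V \<mu> = (\<Sum>v\<in>V. fuzzy_degree V \<mu> v) / 2"

definition fuzzy_lambda :: "'a set \<Rightarrow> ('a \<Rightarrow> 'a \<Rightarrow> real) \<Rightarrow> real" where
  "fuzzy_lambda V \<mu> = 2 * fuzzy_size V \<mu> / real (card V)"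

definition fuzzy_sigma :: "'a set \<Rightarrow> ('a \<Rightarrow> 'a \<Rightarrow> real) \<Rightarrow> real" where
  "fuzzy_sigma V \<mu> = (\<Sum>v\<in>V. (fuzzy_degree V \<mu> v - fuzzy_lambda V \<mu>)^2) / real (card V)"

definition max_fuzzy_degree :: "'a set \<Rightarrow> ('a \<Rightarrow> 'a \<Rightarrow> real) \<Rightarrow> real" where
  "max_fuzzy_degree V \<mu> = Max (fuzzy_degree V \<mu> ` V)"

definition min_fuzzy_degree :: "'a set \<Rightarrow> ('a \<Rightarrow> 'a \<Rightarrow> real) \<Rightarrow> real" where
  "min_fuzzy_degree V \<mu> = Min (fuzzy_degree V \<mu> ` V)"

end

theory Submission
  imports Defs
begin

text \<open>For any two vertices \<open>a\<close>, \<open>b\<close> and any centre \<open>c\<close>, the parallelogram identity gives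
  \<open>(d a - d b)\<^sup>2 \<le> 2((d a - c)\<^sup>2 + (d b - c)\<^sup>2)\<close>, and the right-hand side is at most twice the
  total squared deviation. Taking \<open>a\<close>, \<open>b\<close> of maximum and minimum degree, \<open>c = \<lambda>\<close>, and dividing
  by \<open>n\<close> yields \<open>\<sigma>* \<ge> (\<Delta> - \<delta>)\<^sup>2 / (2n)\<close>, which is at least \<open>(\<Delta> - \<delta>)\<^sup>2 / n\<^sup>2\<close> since \<open>n \<ge> 2\<close>
  whenever \<open>\<Delta> \<noteq> \<delta>\<close>.\<close>

lemma sq_diff_le_two_sum_sq_dev:
  fixes x y c :: real
  shows "(x - y)\<^sup>2 \<le> 2 * ((x - c)\<^sup>2 + (y - c)\<^sup>2)"
proof -
  have "2 * ((x - c)\<^sup>2 + (y - c)\<^sup>2) = (x - y)\<^sup>2 + (x + y - 2 * c)\<^sup>2"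
    by (simp add: power2_eq_square algebra_simps)
  then show ?thesis by simp
qed

lemma sq_diff_le_two_sum_sq_dev_set:
  fixes f :: "'a \<Rightarrow> real" and c :: real
  assumes "finite A" and "a \<in> A" and "b \<in> A" and "a \<noteq> b"
  shows "(f a - f b)\<^sup>2 \<le> 2 * (\<Sum>v\<in>A. (f v - c)\<^sup>2)"
proof -
  have "(\<Sum>v\<in>{a, b}. (f v - c)\<^sup>2) \<le> (\<Sum>v\<in>A. (f v - c)\<^sup>2)"
    using assms by (intro sum_mono2) auto
  then have "(f a - c)\<^sup>2 + (f b - c)\<^sup>2 \<le> (\<Sum>v\<in>A. (f v - c)\<^sup>2)"
    using \<open>a \<noteq> b\<close> by simp
  then have "2 * ((f a - c)\<^sup>2 + (f b - c)\<^sup>2) \<le> 2 * (\<Sum>v\<in>A. (f v - c)\<^sup>2)"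
    by simp
  with sq_diff_le_two_sum_sq_dev show ?thesis
    by (rule order_trans)
qed

lemma sq_diff_div_card_sq_le_mean_sq_dev:
  fixes f :: "'a \<Rightarrow> real" and c :: real
  assumes "finite A" and "a \<in> A" and "b \<in> A"
  shows "(f a - f b)\<^sup>2 / (real (card A))\<^sup>2 \<le> (\<Sum>v\<in>A. (f v - c)\<^sup>2) / real (card A)"
proof (cases "a = b")
  case True
  then show ?thesis by (simp add: sum_nonneg)
next
  case False
  let ?n = "real (card A)"
  have "card {a, b} \<le> card A"
    using assms by (intro card_mono) auto
  with False have n_ge_2: "?n \<ge> 2" by simp
  have "(f a - f b)\<^sup>2 / ?n\<^sup>2 \<le> (f a - f b)\<^sup>2 / (2 * ?n)"
    using n_ge_2 by (intro divide_left_mono) (auto simp: power2_eq_square)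
  also have "\<dots> \<le> 2 * (\<Sum>v\<in>A. (f v - c)\<^sup>2) / (2 * ?n)"
    using sq_diff_le_two_sum_sq_dev_set[OF assms False] n_ge_2
    by (intro divide_right_mono) auto
  also have "\<dots> = (\<Sum>v\<in>A. (f v - c)\<^sup>2) / ?n"
    by simp
  finally show ?thesis .
qed

theorem proposition2p10:
  fixes V :: "'a set" and \<nu> :: "'a \<Rightarrow> real" and \<mu> :: "'a \<Rightarrow> 'a \<Rightarrow> real"
  assumes "fuzzy_graph V \<nu> \<mu>"
    and "\<not> fuzzy_regular V \<mu>"
  shows "fuzzy_sigma V \<mu> \<ge>
           (max_fuzzy_degree V \<mu> - min_fuzzy_degree V \<mu>)^2 / (real (card V))^2"
proof -
  have "finite V" and "V \<noteq> {}"
    using assms(1) by (auto simp: fuzzy_graph_def)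
  then have "max_fuzzy_degree V \<mu> \<in> fuzzy_degree V \<mu> ` V"
    and "min_fuzzy_degree V \<mu> \<in> fuzzy_degree V \<mu> ` V"
    unfolding max_fuzzy_degree_def min_fuzzy_degree_def by (auto intro: Max_in Min_in)
  then obtain a b where "a \<in> V" "fuzzy_degree V \<mu> a = max_fuzzy_degree V \<mu>"
    and "b \<in> V" "fuzzy_degree V \<mu> b = min_fuzzy_degree V \<mu>"
    by (metis imageE)
  with sq_diff_div_card_sq_le_mean_sq_dev[OF \<open>finite V\<close> \<open>a \<in> V\<close> \<open>b \<in> V\<close>,
      of "fuzzy_degree V \<mu>" "fuzzy_lambda V \<mu>"]
  show ?thesis
    by (simp add: fuzzy_sigma_def)
qed

end
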